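(* Let $f$ be a spectral density on $\Lambda$ and let $\lambda_{1,n}(f)$ be the smallest eigenvalue of $T_n(f)$. Then $$\limsup_{n\to\infty}\sqrt[2n]{\lambda_{1,n}(f)}\le\tau^*(E_f).$$
   Context: $\Lambda=[-\pi,\pi]$. A spectral density is $f\ge0$, $f\in L^1(\Lambda)$, positive on a set of positive measure; $r(t)=\int_\Lambda e^{-it\lambda}f(\lambda)d\lambda$. $T_n(f)=(r(k-j))_{j,k=0,1,\dots,n}$ is the $(n+1)\times(n+1)$ truncated Toeplitz matrix. $E_f=\{e^{i\lambda}:f(\lambda)>0\}\subset\mathbb T$. Transfinite diameter of compact $F\subset\mathbb C$: $\tau(F)=\lim_{n\to\infty}\max_{z_1,\dots,z_n\in F}\big(\prod_{1\le j<k\le n}|z_j-z_k|\big)^{2/(n(n-1))}$; outer transfinite diameter $\tau^*(E)=\tau(\overline E)$. *)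

theory Defs
  imports "HOL-Analysis.Analysis" "Jordan_Normal_Form.Char_Poly"
begin

definition spectral_density :: "(real \<Rightarrow> real) \<Rightarrow> bool" where
  "spectral_density f \<longleftrightarrow>
     (\<forall>x\<in>{-pi..pi}. 0 \<le> f x) \<and>
     set_integrable lborel {-pi..pi} f \<and>
     emeasure lborel {x\<in>{-pi..pi}. 0 < f x} > 0"

definition cov_fun :: "(real \<Rightarrow> real) \<Rightarrow> int \<Rightarrow> complex" where
  "cov_fun f t = (LINT x:{-pi..pi}|lborel. exp (- \<i> * of_int t * of_real x) * of_real (f x))"

definition toeplitz_mat :: "(real \<Rightarrow> real) \<Rightarrow> nat \<Rightarrow> complex mat" where
  "toeplitz_mat f n = mat (Suc n) (Suc n) (\<lambda>(j, k). cov_fun f (int k - int j))"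

text \<open>Smallest eigenvalue of the (Hermitian) matrix T_n(f); its eigenvalues are real.\<close>
definition min_eig :: "(real \<Rightarrow> real) \<Rightarrow> nat \<Rightarrow> real" where
  "min_eig f n = Min {x :: real. eigenvalue (toeplitz_mat f n) (complex_of_real x)}"

definition E_set :: "(real \<Rightarrow> real) \<Rightarrow> complex set" where
  "E_set f = {cis x | x. x \<in> {-pi..pi} \<and> 0 < f x}"

definition nth_diam :: "complex set \<Rightarrow> nat \<Rightarrow> real" where
  "nth_diam F n = (SUP z \<in> {z :: nat \<Rightarrow> complex. \<forall>i<n. z i \<in> F}.
      (\<Prod>(j, k) \<in> {(j, k). j < k \<and> k < n}. cmod (z j - z k)) powr (2 / (real n * (real n - 1))))"

definition transfinite_diam :: "complex set \<Rightarrow> real" where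
  "transfinite_diam F = lim (nth_diam F)"

definition outer_transfinite_diam :: "complex set \<Rightarrow> real" where
  "outer_transfinite_diam E = transfinite_diam (closure E)"

end

theory Submission
  imports Defs
begin

text \<open>Testing the Rayleigh quotient of \<open>T\<^sub>n(f)\<close> with the coefficient vector of a monic polynomial
  \<open>p\<close> of degree \<open>n\<close> gives \<open>\<lambda>\<^sub>1\<^sub>,\<^sub>n(f) \<le> \<integral> |p(e\<^sup>i\<^sup>\<lambda>)|\<^sup>2 f(\<lambda>) d\<lambda> \<le> \<parallel>f\<parallel>\<^sub>1 sup\<^sub>E\<^sub>f |p|\<^sup>2\<close>.
  Taking as roots of \<open>p\<close> all but one point of an almost extremal \<open>n + 1\<close>-point configuration
  of \<open>F = closure E\<^sub>f\<close> (the dropped point having the smallest product of distances to the others)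
  makes \<open>sup\<^sub>F |p| \<le> 2 \<delta>\<^sub>n\<^sub>+\<^sub>1\<^sup>n\<close>, where \<open>\<delta>\<^sub>k\<close> is the \<open>k\<close>-th diameter of \<open>F\<close>. Hence
  \<open>\<lambda>\<^sub>1\<^sub>,\<^sub>n(f)\<^bsup>1/(2n)\<^esup> \<le> (4 \<parallel>f\<parallel>\<^sub>1)\<^bsup>1/(2n)\<^esup> \<delta>\<^sub>n\<^sub>+\<^sub>1\<close>, and the diameters decrease to \<open>\<tau>(F)\<close>.\<close>

section \<open>Hermitian forms and the Rayleigh quotient\<close>

text \<open>Square matrices of size \<open>N\<close> are handled as functions \<open>nat \<Rightarrow> nat \<Rightarrow> complex\<close>
  and vectors as functions \<open>nat \<Rightarrow> complex\<close>; only indices below \<open>N\<close> matter.\<close>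

definition sesq :: "nat \<Rightarrow> (nat \<Rightarrow> nat \<Rightarrow> complex) \<Rightarrow> (nat \<Rightarrow> complex) \<Rightarrow> (nat \<Rightarrow> complex) \<Rightarrow> complex"
  where "sesq N M u w = (\<Sum>i<N. \<Sum>j<N. cnj (u i) * M i j * w j)"

definition norm_sq :: "nat \<Rightarrow> (nat \<Rightarrow> complex) \<Rightarrow> real"
  where "norm_sq N u = (\<Sum>i<N. (cmod (u i))\<^sup>2)"

definition mat_vec :: "nat \<Rightarrow> (nat \<Rightarrow> nat \<Rightarrow> complex) \<Rightarrow> (nat \<Rightarrow> complex) \<Rightarrow> nat \<Rightarrow> complex"
  where "mat_vec N M w = (\<lambda>i. \<Sum>j<N. M i j * w j)"

definition hermitian :: "nat \<Rightarrow> (nat \<Rightarrow> nat \<Rightarrow> complex) \<Rightarrow> bool"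
  where "hermitian N M \<longleftrightarrow> (\<forall>i<N. \<forall>j<N. M i j = cnj (M j i))"

abbreviation entries :: "'a mat \<Rightarrow> nat \<Rightarrow> nat \<Rightarrow> 'a"
  where "entries A \<equiv> \<lambda>i j. A $$ (i, j)"

lemma cnj_mult_self: "cnj s * s = complex_of_real ((cmod s)\<^sup>2)" "s * cnj s = complex_of_real ((cmod s)\<^sup>2)"
  by (metis complex_norm_square mult.commute)+

lemma norm_sq_nonneg: "0 \<le> norm_sq N u"
  unfolding norm_sq_def by (simp add: sum_nonneg)

lemma norm_sq_eq_0D: "norm_sq N u = 0 \<Longrightarrow> i < N \<Longrightarrow> u i = 0"
  unfolding norm_sq_def by (subst (asm) sum_nonneg_eq_0_iff) auto

lemma norm_sq_cong: "(\<And>i. i < N \<Longrightarrow> x i = y i) \<Longrightarrow> norm_sq N x = norm_sq N y"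
  unfolding norm_sq_def by (intro sum.cong) auto

lemma sq_cmod_le_norm_sq: "i < N \<Longrightarrow> (cmod (u i))\<^sup>2 \<le> norm_sq N u"
  unfolding norm_sq_def by (rule member_le_sum) auto

lemma cmod_mult_le_norm_sq:
  assumes "i < N" "j < N" shows "cmod (u i) * cmod (u j) \<le> norm_sq N u"
proof -
  have "cmod (u i) * cmod (u j) \<le> ((cmod (u i))\<^sup>2 + (cmod (u j))\<^sup>2) / 2"
    using sum_squares_bound[of "cmod (u i)" "cmod (u j)"] by (simp add: power2_eq_square field_simps)
  also have "\<dots> \<le> norm_sq N u"
    using sq_cmod_le_norm_sq[OF assms(1), of u] sq_cmod_le_norm_sq[OF assms(2), of u] by simp
  finally show ?thesis .
qed

lemma sesq_eq_0: "norm_sq N x = 0 \<Longrightarrow> sesq N M x x = 0"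
  unfolding sesq_def using norm_sq_eq_0D by (intro sum.neutral ballI) auto

lemma sesq_hermitian_swap: assumes "hermitian N M" shows "sesq N M w u = cnj (sesq N M u w)"
proof -
  have cnj_M: "cnj (M i j) = M j i" if "i < N" "j < N" for i j
    using assms that unfolding hermitian_def by (metis complex_cnj_cnj)
  have "cnj (sesq N M u w) = (\<Sum>i<N. \<Sum>j<N. u i * cnj (M i j) * cnj (w j))"
    unfolding sesq_def by simp
  also have "\<dots> = (\<Sum>j<N. \<Sum>i<N. u i * cnj (M i j) * cnj (w j))" by (rule sum.swap)
  also have "\<dots> = sesq N M w u"
    unfolding sesq_def by (intro sum.cong refl) (simp add: cnj_M mult_ac)
  finally show ?thesis by simp
qed

lemma sesq_add_scaled:
  "sesq N M (\<lambda>i. u i + c * w i) (\<lambda>i. u i + c * w i) =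
   sesq N M u u + c * sesq N M u w + cnj c * sesq N M w u + cnj c * c * sesq N M w w"
proof -
  have "cnj (a + c * b) * m * (a' + c * b') =
     cnj a * m * a' + c * (cnj a * m * b') + cnj c * (cnj b * m * a') + cnj c * c * (cnj b * m * b')"
    for a b a' b' m :: complex
    unfolding complex_cnj_add complex_cnj_mult by (simp add: distrib_left distrib_right mult_ac)
  thus ?thesis unfolding sesq_def by (simp only: sum.distrib sum_distrib_left)
qed

lemma le_mult_if_quadratic_nonneg:
  fixes a b q :: real
  assumes b: "0 \<le> b" and q: "0 \<le> q" and quad: "\<And>t. 0 \<le> a - 2 * t * q + t\<^sup>2 * q * b"
  shows "q \<le> a * b"
proof (cases "b = 0")
  case True
  show ?thesis
  proof (rule ccontr)
    assume "\<not> q \<le> a * b"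
    hence "q > 0" using True by simp
    thus False using quad[of "(\<bar>a\<bar> + 1) / q"] True by simp
  qed
next
  case False
  hence "b > 0" using b by simp
  have "0 \<le> a - 2 * (1 / b) * q + (1 / b)\<^sup>2 * q * b" by (rule quad)
  also have "\<dots> = a - q / b" using \<open>b > 0\<close> by (simp add: power2_eq_square field_simps)
  finally show ?thesis using \<open>b > 0\<close> by (simp add: divide_le_eq mult.commute)
qed

lemma cauchy_schwarz_sesq:
  assumes herm: "hermitian N M" and psd: "\<And>x. 0 \<le> Re (sesq N M x x)"
  shows "(cmod (sesq N M u w))\<^sup>2 \<le> Re (sesq N M u u) * Re (sesq N M w w)"
proof (rule le_mult_if_quadratic_nonneg[OF psd zero_le_power2])
  fix t :: real
  define s where "s = sesq N M u w"
  define c where "c = - of_real t * cnj s"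
  have cs: "c * s = - of_real (t * (cmod s)\<^sup>2)"
    unfolding c_def by (simp add: cnj_mult_self(1) mult.assoc)
  have cs': "cnj c * cnj s = - of_real (t * (cmod s)\<^sup>2)"
    unfolding c_def by (simp add: cnj_mult_self(2) mult.assoc)
  have cc: "cnj c * c = of_real (t\<^sup>2 * (cmod s)\<^sup>2)"
    unfolding c_def
    by (simp add: power2_eq_square mult.assoc mult.left_commute[of "cnj s"] cnj_mult_self(2))
  have "0 \<le> Re (sesq N M (\<lambda>i. u i + c * w i) (\<lambda>i. u i + c * w i))" by (rule psd)
  also have "\<dots> = Re (sesq N M u u + c * s + cnj c * cnj s + cnj c * c * sesq N M w w)"
    using sesq_add_scaled[of N M u c w] sesq_hermitian_swap[OF herm, of w u] s_def by simp
  also have "\<dots> = Re (sesq N M u u) - 2 * t * (cmod s)\<^sup>2 + t\<^sup>2 * (cmod s)\<^sup>2 * Re (sesq N M w w)"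
    unfolding cs cs' cc by simp
  finally show "0 \<le> Re (sesq N M u u) - 2 * t * (cmod (sesq N M u w))\<^sup>2
      + t\<^sup>2 * (cmod (sesq N M u w))\<^sup>2 * Re (sesq N M w w)"
    unfolding s_def .
qed

lemma cmod_sesq_le: "cmod (sesq N M x x) \<le> (\<Sum>i<N. \<Sum>j<N. cmod (M i j)) * norm_sq N x"
proof -
  have "cmod (sesq N M x x) \<le> (\<Sum>i<N. \<Sum>j<N. cmod (cnj (x i) * M i j * x j))"
    unfolding sesq_def by (rule order_trans[OF norm_sum sum_mono]) (rule norm_sum)
  also have "\<dots> \<le> (\<Sum>i<N. \<Sum>j<N. cmod (M i j) * norm_sq N x)"
  proof (intro sum_mono)
    fix i j assume "i \<in> {..<N}" "j \<in> {..<N}"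
    hence "cmod (M i j) * (cmod (x i) * cmod (x j)) \<le> cmod (M i j) * norm_sq N x"
      by (intro mult_left_mono cmod_mult_le_norm_sq) auto
    thus "cmod (cnj (x i) * M i j * x j) \<le> cmod (M i j) * norm_sq N x"
      by (simp add: norm_mult mult_ac)
  qed
  also have "\<dots> = (\<Sum>i<N. \<Sum>j<N. cmod (M i j)) * norm_sq N x"
    by (simp add: sum_distrib_right)
  finally show ?thesis .
qed

lemma norm_sq_mat_vec_le:
  "norm_sq N (mat_vec N B w) \<le> (\<Sum>i<N. (\<Sum>j<N. cmod (B i j))\<^sup>2) * norm_sq N w"
proof -
  have "(cmod (mat_vec N B w i))\<^sup>2 \<le> (\<Sum>j<N. cmod (B i j))\<^sup>2 * norm_sq N w" for i
  proof -
    have w_le: "cmod (w j) \<le> sqrt (norm_sq N w)" if "j < N" for j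
      using sq_cmod_le_norm_sq[OF that] by (simp add: real_le_rsqrt)
    have "cmod (mat_vec N B w i) \<le> (\<Sum>j<N. cmod (B i j) * cmod (w j))"
      unfolding mat_vec_def by (rule order_trans[OF norm_sum]) (simp add: norm_mult)
    also have "\<dots> \<le> (\<Sum>j<N. cmod (B i j) * sqrt (norm_sq N w))"
      by (intro sum_mono mult_left_mono w_le) auto
    finally have "cmod (mat_vec N B w i) \<le> (\<Sum>j<N. cmod (B i j)) * sqrt (norm_sq N w)"
      by (simp add: sum_distrib_right)
    hence "(cmod (mat_vec N B w i))\<^sup>2 \<le> ((\<Sum>j<N. cmod (B i j)) * sqrt (norm_sq N w))\<^sup>2"
      by (intro power_mono) auto
    thus ?thesis using norm_sq_nonneg[of N w] by (simp add: power_mult_distrib)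
  qed
  hence "norm_sq N (mat_vec N B w) \<le> (\<Sum>i<N. (\<Sum>j<N. cmod (B i j))\<^sup>2 * norm_sq N w)"
    unfolding norm_sq_def[of N "mat_vec N B w"] by (intro sum_mono) auto
  thus ?thesis by (simp add: sum_distrib_right)
qed

lemma sesq_mat_vec_left: "sesq N M (mat_vec N M w) w = of_real (norm_sq N (mat_vec N M w))"
proof -
  have row: "(\<Sum>j<N. a * M i j * w j) = a * mat_vec N M w i" for a i
    unfolding mat_vec_def by (simp add: sum_distrib_left mult.assoc)
  show ?thesis
    unfolding sesq_def row norm_sq_def of_real_sum
    by (intro sum.cong refl) (metis complex_norm_square mult.commute)
qed

lemma sesq_shift_diagonal:
  "Re (sesq N (\<lambda>i j. M i j - (if i = j then of_real m else 0)) x x) =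
   Re (sesq N M x x) - m * norm_sq N x"
proof -
  have "(\<Sum>i<N. \<Sum>j<N. cnj (x i) * (if i = j then of_real m else 0) * x j)
      = (\<Sum>i<N. of_real m * (cnj (x i) * x i))"
    by (intro sum.cong refl) (simp add: if_distrib if_distribR cong: if_cong)
  also have "\<dots> = of_real (m * norm_sq N x)"
    unfolding norm_sq_def of_real_mult of_real_sum sum_distrib_left cnj_mult_self by simp
  finally show ?thesis
    unfolding sesq_def by (simp add: sum_subtractf right_diff_distrib left_diff_distrib)
qed

text \<open>A positive semidefinite Hermitian matrix \<open>C\<close> with a left inverse is coercive:
  \<open>\<parallel>w\<parallel>\<^sup>2 \<le> K \<parallel>C w\<parallel>\<^sup>2\<close>, and \<open>\<parallel>C w\<parallel>\<^sup>4 \<le> \<langle>C(Cw), Cw\<rangle> \<langle>Cw, w\<rangle>\<close> by Cauchy-Schwarz, where the first factor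
  is at most \<open>K' \<parallel>C w\<parallel>\<^sup>2\<close>.\<close>
lemma psd_left_invertible_coercive:
  assumes herm: "hermitian N C" and psd: "\<And>x. 0 \<le> Re (sesq N C x x)"
    and inv: "\<And>x i. i < N \<Longrightarrow> mat_vec N B (mat_vec N C x) i = x i"
  shows "\<exists>K\<ge>0. \<forall>w. norm_sq N w \<le> K * Re (sesq N C w w)"
proof -
  define KB where "KB = (\<Sum>i<N. (\<Sum>j<N. cmod (B i j))\<^sup>2)"
  define KC where "KC = (\<Sum>i<N. \<Sum>j<N. cmod (C i j))"
  have KB0: "KB \<ge> 0" and KC0: "KC \<ge> 0" unfolding KB_def KC_def by (simp_all add: sum_nonneg)
  have bound: "norm_sq N w \<le> KB * KC * Re (sesq N C w w)" for w
  proof -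
    define r where "r = norm_sq N (mat_vec N C w)"
    have "r\<^sup>2 \<le> Re (sesq N C (mat_vec N C w) (mat_vec N C w)) * Re (sesq N C w w)"
      using cauchy_schwarz_sesq[OF herm psd, of "mat_vec N C w" w]
      unfolding sesq_mat_vec_left r_def by simp
    also have "\<dots> \<le> (KC * r) * Re (sesq N C w w)"
      using cmod_sesq_le[of N C "mat_vec N C w"] psd[of w]
        abs_Re_le_cmod[of "sesq N C (mat_vec N C w) (mat_vec N C w)"]
      unfolding KC_def r_def by (intro mult_right_mono) auto
    finally have r2: "r\<^sup>2 \<le> KC * r * Re (sesq N C w w)" .
    moreover have "r \<ge> 0" unfolding r_def by (rule norm_sq_nonneg)
    ultimately have r_le: "r \<le> KC * Re (sesq N C w w)"
    proof (cases "r = 0")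
      case True thus ?thesis using KC0 psd[of w] by simp
    next
      case False thus ?thesis using \<open>r \<ge> 0\<close> r2 by (simp add: power2_eq_square mult.assoc)
    qed
    have "norm_sq N w = norm_sq N (mat_vec N B (mat_vec N C w))"
      by (rule norm_sq_cong) (simp add: inv)
    also have "\<dots> \<le> KB * r" unfolding KB_def r_def by (rule norm_sq_mat_vec_le)
    also have "\<dots> \<le> KB * (KC * Re (sesq N C w w))" by (rule mult_left_mono[OF r_le KB0])
    finally show ?thesis by (simp add: mult.assoc)
  qed
  thus ?thesis using KB0 KC0 by (intro exI[of _ "KB * KC"] conjI allI bound) simp
qed

lemma mat_vec_mult:
  assumes B: "B \<in> carrier_mat N N" and C: "C \<in> carrier_mat N N" and i: "i < N"
  shows "mat_vec N (entries B) (mat_vec N (entries C) x) i = mat_vec N (entries (B * C)) x i"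
proof -
  have "mat_vec N (entries B) (mat_vec N (entries C) x) i =
      (\<Sum>j<N. \<Sum>k<N. B $$ (i, j) * C $$ (j, k) * x k)"
    unfolding mat_vec_def by (simp add: sum_distrib_left mult.assoc)
  also have "\<dots> = (\<Sum>k<N. \<Sum>j<N. B $$ (i, j) * C $$ (j, k) * x k)" by (rule sum.swap)
  also have "\<dots> = mat_vec N (entries (B * C)) x i"
    unfolding mat_vec_def
  proof (intro sum.cong refl)
    fix k assume k: "k \<in> {..<N}"
    have "(B * C) $$ (i, k) = (\<Sum>j<N. B $$ (i, j) * C $$ (j, k))"
      using B C i k by (simp add: scalar_prod_def atLeast0LessThan)
    thus "(\<Sum>j<N. B $$ (i, j) * C $$ (j, k) * x k) = (B * C) $$ (i, k) * x k"
      by (simp add: sum_distrib_right)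
  qed
  finally show ?thesis .
qed

lemma char_matrix_left_inverse:
  assumes A: "A \<in> carrier_mat N N" and not_eig: "\<not> eigenvalue A c"
  obtains B where "\<And>x i. i < N \<Longrightarrow> mat_vec N B (mat_vec N (entries (char_matrix A c)) x) i = x i"
proof -
  define C where "C = char_matrix A c"
  have C: "C \<in> carrier_mat N N" using A C_def by simp
  have "det C \<noteq> 0" using eigenvalue_det[OF A] not_eig C_def by simp
  from det_non_zero_imp_unit[OF C this, of "()"] obtain B
    where B: "B \<in> carrier_mat N N" "B * C = 1\<^sub>m N"
    unfolding Units_def ring_mat_def by auto
  have "mat_vec N (entries B) (mat_vec N (entries C) x) i = x i" if i: "i < N" for x i
  proof -
    have "mat_vec N (entries (B * C)) x i = (\<Sum>k<N. (if i = k then x k else 0))"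
      unfolding mat_vec_def using B(2) i by (intro sum.cong refl) auto
    thus ?thesis using i by (simp add: mat_vec_mult[OF B(1) C i])
  qed
  thus thesis using that C_def by blast
qed

lemma char_matrix_entries:
  assumes "A \<in> carrier_mat N N" "i < N" "j < N"
  shows "char_matrix A c $$ (i, j) = A $$ (i, j) - (if i = j then c else 0)"
  using assms unfolding char_matrix_def by auto

lemma hermitian_char_matrix:
  assumes A: "A \<in> carrier_mat N N" and herm: "hermitian N (entries A)"
  shows "hermitian N (entries (char_matrix A (of_real m)))"
  unfolding hermitian_def
proof (intro allI impI)
  fix i j assume ij: "i < N" "j < N"
  have "cnj (A $$ (j, i)) = A $$ (i, j)"
    using herm ij unfolding hermitian_def by (metis complex_cnj_cnj)
  thus "char_matrix A (of_real m) $$ (i, j) = cnj (char_matrix A (of_real m) $$ (j, i))"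
    using ij by (simp add: char_matrix_entries[OF A])
qed

lemma sesq_char_matrix:
  assumes A: "A \<in> carrier_mat N N"
  shows "Re (sesq N (entries (char_matrix A (of_real m))) x x) =
    Re (sesq N (entries A) x x) - m * norm_sq N x"
proof -
  have "sesq N (entries (char_matrix A (of_real m))) x x =
      sesq N (\<lambda>i j. A $$ (i, j) - (if i = j then of_real m else 0)) x x"
    unfolding sesq_def by (intro sum.cong refl) (simp add: char_matrix_entries[OF A])
  thus ?thesis by (simp add: sesq_shift_diagonal)
qed

definition rayleigh_quotients :: "nat \<Rightarrow> (nat \<Rightarrow> nat \<Rightarrow> complex) \<Rightarrow> real set"
  where "rayleigh_quotients N M = {Re (sesq N M x x) / norm_sq N x | x. norm_sq N x > 0}"

lemma bdd_below_rayleigh_quotients: "bdd_below (rayleigh_quotients N M)"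
proof (rule bdd_belowI)
  fix r assume "r \<in> rayleigh_quotients N M"
  then obtain x where x: "norm_sq N x > 0" "r = Re (sesq N M x x) / norm_sq N x"
    unfolding rayleigh_quotients_def by auto
  have "- ((\<Sum>i<N. \<Sum>j<N. cmod (M i j)) * norm_sq N x) \<le> Re (sesq N M x x)"
    using cmod_sesq_le[of N M x] abs_Re_le_cmod[of "sesq N M x x"] by linarith
  thus "- (\<Sum>i<N. \<Sum>j<N. cmod (M i j)) \<le> r" using x by (simp add: le_divide_eq)
qed

lemma Inf_rayleigh_quotients_le:
  assumes "norm_sq N x > 0"
  shows "Inf (rayleigh_quotients N M) * norm_sq N x \<le> Re (sesq N M x x)"
  using cInf_lower[OF _ bdd_below_rayleigh_quotients, of "Re (sesq N M x x) / norm_sq N x"] assms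
  unfolding rayleigh_quotients_def by (auto simp: le_divide_eq)

text \<open>Otherwise \<open>A - m I\<close> would be positive semidefinite and invertible, hence coercive,
  while by definition of \<open>m\<close> its quadratic form is arbitrarily small relative to \<open>\<parallel>w\<parallel>\<^sup>2\<close>.\<close>
lemma eigenvalue_Inf_rayleigh_quotients:
  fixes A :: "complex mat"
  assumes A: "A \<in> carrier_mat N N" and herm: "hermitian N (entries A)"
    and ne: "rayleigh_quotients N (entries A) \<noteq> {}"
  shows "eigenvalue A (of_real (Inf (rayleigh_quotients N (entries A))))"
proof (rule ccontr)
  define m where "m = Inf (rayleigh_quotients N (entries A))"
  define C where "C = entries (char_matrix A (of_real m))"
  assume "\<not> eigenvalue A (of_real (Inf (rayleigh_quotients N (entries A))))"
  then obtain B where "\<And>x i. i < N \<Longrightarrow> mat_vec N B (mat_vec N C x) i = x i"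
    using char_matrix_left_inverse[OF A] unfolding C_def m_def by blast
  moreover have "0 \<le> Re (sesq N C x x)" for x
    using Inf_rayleigh_quotients_le[of N x "entries A"] norm_sq_nonneg[of N x]
      sesq_eq_0[of N x "entries A"]
    unfolding C_def sesq_char_matrix[OF A] m_def by (cases "norm_sq N x > 0") auto
  ultimately obtain K where K: "K \<ge> 0" "\<And>w. norm_sq N w \<le> K * Re (sesq N C w w)"
    using psd_left_invertible_coercive hermitian_char_matrix[OF A herm] unfolding C_def by metis
  have "m < m + 1 / (K + 1)" using K(1) by simp
  from cInf_lessD[OF ne this[unfolded m_def]] obtain w where w: "norm_sq N w > 0"
    "Re (sesq N (entries A) w w) / norm_sq N w < m + 1 / (K + 1)"
    unfolding rayleigh_quotients_def m_def by auto
  hence "Re (sesq N C w w) < norm_sq N w / (K + 1)"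
    unfolding C_def sesq_char_matrix[OF A] using K(1) by (simp add: divide_less_eq algebra_simps)
  hence "K * Re (sesq N C w w) \<le> K * (norm_sq N w / (K + 1))"
    using K(1) by (intro mult_left_mono) auto
  also have "\<dots> < norm_sq N w" using K(1) w(1) by (simp add: field_simps)
  finally show False using K(2)[of w] by simp
qed

lemma hermitian_eigenvalue_le_rayleigh:
  fixes A :: "complex mat"
  assumes A: "A \<in> carrier_mat N N" and herm: "hermitian N (entries A)" and v: "norm_sq N v > 0"
  shows "\<exists>\<mu>::real. eigenvalue A (of_real \<mu>) \<and> \<mu> * norm_sq N v \<le> Re (sesq N (entries A) v v)"
proof -
  have "rayleigh_quotients N (entries A) \<noteq> {}" using v unfolding rayleigh_quotients_def by auto
  thus ?thesis
    using eigenvalue_Inf_rayleigh_quotients[OF A herm] Inf_rayleigh_quotients_le[OF v] by blast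
qed

section \<open>The discrete diameters \<open>nth_diam\<close>\<close>

definition pairs :: "nat \<Rightarrow> (nat \<times> nat) set"
  where "pairs N = {(j, k). j < k \<and> k < N}"

definition vandermonde_abs :: "nat \<Rightarrow> (nat \<Rightarrow> complex) \<Rightarrow> real"
  where "vandermonde_abs N z = (\<Prod>(j, k) \<in> pairs N. cmod (z j - z k))"

definition diam_exp :: "nat \<Rightarrow> real"
  where "diam_exp N = 2 / (real N * (real N - 1))"

definition tuples :: "complex set \<Rightarrow> nat \<Rightarrow> (nat \<Rightarrow> complex) set"
  where "tuples F N = {z. \<forall>i<N. z i \<in> F}"

lemma nth_diam_eq_SUP: "nth_diam F N = (SUP z \<in> tuples F N. vandermonde_abs N z powr diam_exp N)"
  unfolding nth_diam_def tuples_def vandermonde_abs_def pairs_def diam_exp_def ..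

lemma finite_pairs: "finite (pairs N)"
  by (rule finite_subset[of _ "{..<N} \<times> {..<N}"]) (auto simp: pairs_def)

lemma card_pairs_le: "card (pairs N) \<le> N * N"
proof -
  have "card (pairs N) \<le> card ({..<N} \<times> {..<N})"
    by (rule card_mono) (auto simp: pairs_def)
  thus ?thesis by (simp add: card_cartesian_product)
qed

lemma vandermonde_abs_fst_snd: "vandermonde_abs N z = (\<Prod>p\<in>pairs N. cmod (z (fst p) - z (snd p)))"
  unfolding vandermonde_abs_def by (simp add: case_prod_beta)

lemma vandermonde_abs_nonneg: "0 \<le> vandermonde_abs N z"
  unfolding vandermonde_abs_def by (intro prod_nonneg) auto

lemma tuples_nonempty: "F \<noteq> {} \<Longrightarrow> tuples F N \<noteq> {}"
  unfolding tuples_def by auto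

lemma vandermonde_abs_le_disc:
  assumes F: "F \<subseteq> cball 0 1" and z: "z \<in> tuples F N"
  shows "vandermonde_abs N z \<le> 2 ^ (N * N)"
proof -
  have "vandermonde_abs N z \<le> (\<Prod>p \<in> pairs N. 2)"
    unfolding vandermonde_abs_def
  proof (intro prod_mono, clarify)
    fix j k assume "(j, k) \<in> pairs N"
    hence "j < N" "k < N" by (auto simp: pairs_def)
    hence "z j \<in> cball 0 1" "z k \<in> cball 0 1" using z F unfolding tuples_def by auto
    hence "cmod (z j) \<le> 1" "cmod (z k) \<le> 1" by auto
    thus "0 \<le> cmod (z j - z k) \<and> cmod (z j - z k) \<le> 2"
      using norm_triangle_ineq4[of "z j" "z k"] by auto
  qed
  also have "\<dots> = 2 ^ card (pairs N)" by simp
  also have "\<dots> \<le> 2 ^ (N * N)" by (rule power_increasing[OF card_pairs_le]) auto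
  finally show ?thesis .
qed

lemma vandermonde_abs_powr_le_16:
  assumes F: "F \<subseteq> cball 0 1" and z: "z \<in> tuples F N"
  shows "vandermonde_abs N z powr diam_exp N \<le> 16"
proof (cases "N < 2")
  case True
  hence "pairs N = {}" unfolding pairs_def by auto
  thus ?thesis unfolding vandermonde_abs_def by simp
next
  case False
  hence N2: "real N \<ge> 2" by simp
  have "vandermonde_abs N z powr diam_exp N \<le> (2 ^ (N * N)) powr diam_exp N"
    using N2 by (intro powr_mono2 vandermonde_abs_nonneg vandermonde_abs_le_disc[OF F z])
      (auto simp: diam_exp_def)
  also have "\<dots> = 2 powr (real (N * N) * diam_exp N)"
    by (simp add: powr_realpow[symmetric] powr_powr)
  also have "real (N * N) * diam_exp N = 2 * real N / (real N - 1)"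
    unfolding diam_exp_def using N2 by (simp add: field_simps)
  also have "2 powr (2 * real N / (real N - 1)) \<le> 2 powr 4"
    using N2 by (intro powr_mono) (auto simp: field_simps)
  finally show ?thesis by simp
qed

lemma bdd_above_vandermonde_abs_powr:
  "F \<subseteq> cball 0 1 \<Longrightarrow> bdd_above ((\<lambda>z. vandermonde_abs N z powr diam_exp N) ` tuples F N)"
  by (rule bdd_aboveI2[of _ _ 16]) (rule vandermonde_abs_powr_le_16)

lemma vandermonde_abs_powr_le_nth_diam:
  assumes "F \<subseteq> cball 0 1" "z \<in> tuples F N"
  shows "vandermonde_abs N z powr diam_exp N \<le> nth_diam F N"
  unfolding nth_diam_eq_SUP using assms by (intro cSUP_upper bdd_above_vandermonde_abs_powr)

lemma nth_diam_nonneg: assumes "F \<subseteq> cball 0 1" "F \<noteq> {}" shows "0 \<le> nth_diam F N"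
proof -
  obtain z where "z \<in> tuples F N" using tuples_nonempty[OF assms(2)] by auto
  thus ?thesis using vandermonde_abs_powr_le_nth_diam[OF assms(1)] by (meson order_trans powr_ge_zero)
qed

lemma nth_diam_le_16: assumes "F \<subseteq> cball 0 1" "F \<noteq> {}" shows "nth_diam F N \<le> 16"
  unfolding nth_diam_eq_SUP
  using assms by (intro cSUP_least tuples_nonempty vandermonde_abs_powr_le_16)

lemma nth_diam_pos: assumes F: "F \<subseteq> cball 0 1" "infinite F" shows "nth_diam F N > 0"
proof -
  obtain A where A: "finite A" "card A = N" "A \<subseteq> F"
    using infinite_arbitrarily_large[OF F(2)] by blast
  obtain h where h: "bij_betw h {0..<N} A" using ex_bij_betw_nat_finite[OF A(1)] A(2) by auto
  have h_tuple: "h \<in> tuples F N" using h A(3) unfolding tuples_def bij_betw_def by auto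
  have "vandermonde_abs N h > 0" unfolding vandermonde_abs_def
  proof (intro prod_pos, clarify)
    fix j k assume "(j, k) \<in> pairs N"
    hence "h j \<noteq> h k" using h unfolding bij_betw_def inj_on_def pairs_def by fastforce
    thus "0 < cmod (h j - h k)" by simp
  qed
  hence "vandermonde_abs N h powr diam_exp N > 0" by simp
  also have "\<dots> \<le> nth_diam F N" by (rule vandermonde_abs_powr_le_nth_diam[OF F(1) h_tuple])
  finally show ?thesis .
qed

lemma prod_prod_filter_swap:
  fixes g :: "'a \<Rightarrow> real"
  assumes P: "finite P" and K: "finite K"
  shows "(\<Prod>k\<in>K. \<Prod>p\<in>{p\<in>P. Q k p}. g p) = (\<Prod>p\<in>P. g p ^ card {k\<in>K. Q k p})"
proof -
  have "(\<Prod>k\<in>K. \<Prod>p\<in>{p\<in>P. Q k p}. g p) = (\<Prod>k\<in>K. \<Prod>p\<in>P. if Q k p then g p else 1)"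
    using P by (simp add: prod.inter_filter)
  also have "\<dots> = (\<Prod>p\<in>P. \<Prod>k\<in>K. if Q k p then g p else 1)" by (rule prod.swap)
  also have "\<dots> = (\<Prod>p\<in>P. g p ^ card {k\<in>K. Q k p})"
    unfolding prod.inter_filter[OF K, symmetric] by simp
  finally show ?thesis .
qed

lemma powr_le_imp_le_powr_inverse:
  fixes x e d :: real assumes "0 \<le> x" "e > 0" "x powr e \<le> d"
  shows "x \<le> d powr (1 / e)"
proof -
  have "x = (x powr e) powr (1 / e)" using assms by (simp add: powr_powr)
  also have "\<dots> \<le> d powr (1 / e)" using assms by (intro powr_mono2) auto
  finally show ?thesis .
qed

definition skip :: "nat \<Rightarrow> nat \<Rightarrow> nat"
  where "skip k i = (if i < k then i else Suc i)"

lemma skip_tuples: "z \<in> tuples F (Suc N) \<Longrightarrow> k < Suc N \<Longrightarrow> z \<circ> skip k \<in> tuples F N"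
  unfolding tuples_def skip_def by auto

lemma bij_betw_skip:
  assumes "k < Suc n" shows "bij_betw (skip k) {..<n} ({..<Suc n} - {k})"
proof -
  have "x \<in> skip k ` {..<n}" if x: "x \<in> {..<Suc n} - {k}" for x
  proof (cases "x < k")
    case True thus ?thesis using x assms by (intro image_eqI[of _ _ x]) (auto simp: skip_def)
  next
    case False thus ?thesis using x assms by (intro image_eqI[of _ _ "x - 1"]) (auto simp: skip_def)
  qed
  moreover have "skip k ` {..<n} \<subseteq> {..<Suc n} - {k}" "inj_on (skip k) {..<n}"
    unfolding inj_on_def skip_def by auto
  ultimately show ?thesis unfolding bij_betw_def by blast
qed

lemma pairs_skip:
  assumes k: "k < Suc N"
  shows "bij_betw (\<lambda>(i, j). (skip k i, skip k j)) (pairs N)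
           {p \<in> pairs (Suc N). fst p \<noteq> k \<and> snd p \<noteq> k}"
proof -
  have "p \<in> (\<lambda>(i, j). (skip k i, skip k j)) ` pairs N"
    if p: "p \<in> {p \<in> pairs (Suc N). fst p \<noteq> k \<and> snd p \<noteq> k}" for p
  proof -
    obtain a b where ab: "p = (a, b)" by (cases p)
    define a' where "a' = (if a < k then a else a - 1)"
    define b' where "b' = (if b < k then b else b - 1)"
    have "(a', b') \<in> pairs N" "skip k a' = a" "skip k b' = b"
      using p ab k unfolding a'_def b'_def skip_def pairs_def by auto
    thus ?thesis using ab by force
  qed
  moreover have "(\<lambda>(i, j). (skip k i, skip k j)) ` pairs N
      \<subseteq> {p \<in> pairs (Suc N). fst p \<noteq> k \<and> snd p \<noteq> k}"
    unfolding skip_def pairs_def by (auto split: if_splits)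
  moreover have "inj_on (\<lambda>(i, j). (skip k i, skip k j)) (pairs N)"
    unfolding inj_on_def skip_def by (auto split: if_splits)
  ultimately show ?thesis unfolding bij_betw_def by blast
qed

lemma vandermonde_abs_skip:
  assumes "k < Suc N"
  shows "vandermonde_abs N (z \<circ> skip k) =
    (\<Prod>p\<in>{p \<in> pairs (Suc N). fst p \<noteq> k \<and> snd p \<noteq> k}. cmod (z (fst p) - z (snd p)))"
  unfolding vandermonde_abs_def prod.reindex_bij_betw[OF pairs_skip[OF assms], symmetric]
  by (simp add: case_prod_beta)

lemma prod_vandermonde_abs_skip:
  "(\<Prod>k<Suc N. vandermonde_abs N (z \<circ> skip k)) = vandermonde_abs (Suc N) z ^ (N - 1)"
proof -
  have "(\<Prod>k<Suc N. vandermonde_abs N (z \<circ> skip k)) =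
     (\<Prod>p\<in>pairs (Suc N). cmod (z (fst p) - z (snd p)) ^ card {k\<in>{..<Suc N}. fst p \<noteq> k \<and> snd p \<noteq> k})"
    unfolding prod_prod_filter_swap[OF finite_pairs finite_lessThan, symmetric]
    by (intro prod.cong refl vandermonde_abs_skip) auto
  also have "\<dots> = (\<Prod>p\<in>pairs (Suc N). cmod (z (fst p) - z (snd p)) ^ (N - 1))"
  proof (intro prod.cong refl)
    fix p assume p: "p \<in> pairs (Suc N)"
    have "{k\<in>{..<Suc N}. fst p \<noteq> k \<and> snd p \<noteq> k} = {..<Suc N} - {fst p, snd p}" by auto
    moreover have "card ({..<Suc N} - {fst p, snd p}) = N - 1"
      using p unfolding pairs_def by (subst card_Diff_subset) auto
    ultimately show "cmod (z (fst p) - z (snd p)) ^ card {k\<in>{..<Suc N}. fst p \<noteq> k \<and> snd p \<noteq> k} =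
        cmod (z (fst p) - z (snd p)) ^ (N - 1)" by simp
  qed
  also have "\<dots> = vandermonde_abs (Suc N) z ^ (N - 1)"
    unfolding vandermonde_abs_fst_snd by (simp add: prod_power_distrib)
  finally show ?thesis .
qed

lemma powr_diam_exp_Suc_le:
  fixes x d :: real
  assumes x: "0 \<le> x" and d: "0 \<le> d" and N: "N \<ge> 2"
    and le: "x ^ (N - 1) \<le> (d powr (1 / diam_exp N)) ^ Suc N"
  shows "x powr diam_exp (Suc N) \<le> d"
proof (cases "x = 0 \<or> d = 0")
  case True
  have "x = 0"
  proof (rule ccontr)
    assume "x \<noteq> 0"
    hence "0 < x ^ (N - 1)" "d = 0" using True x by auto
    thus False using le by simp
  qed
  thus ?thesis using d by simp
next
  case False
  hence pos: "x > 0" "d > 0" using x d by linarith+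
  define a where "a = real N * (real N - 1) / 2"
  have a_eq: "1 / diam_exp N = a" unfolding a_def diam_exp_def by simp
  have "x powr (real N - 1) \<le> d powr (a * (real N + 1))"
    using le pos N unfolding a_eq
    by (simp add: powr_realpow[symmetric] powr_powr of_nat_diff powr_add[symmetric] algebra_simps)
  hence "(x powr (real N - 1)) powr (diam_exp (Suc N) / (real N - 1))
      \<le> (d powr (a * (real N + 1))) powr (diam_exp (Suc N) / (real N - 1))"
    using N by (intro powr_mono2) (auto simp: diam_exp_def)
  hence "x powr diam_exp (Suc N) \<le> d powr (a * (real N + 1) * diam_exp (Suc N) / (real N - 1))"
    using N by (simp add: powr_powr)
  moreover have "real N * real N \<noteq> 1"
    using N mult_mono[of 2 "real N" 2 "real N"] by auto
  hence "a * (real N + 1) * diam_exp (Suc N) / (real N - 1) = 1"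
    unfolding a_def diam_exp_def using N by (simp add: field_simps)
  ultimately show ?thesis using pos by simp
qed

text \<open>Deleting one point at a time: each pair of the \<open>N + 1\<close> points survives \<open>N - 1\<close> of the
  \<open>N + 1\<close> deletions, and each \<open>N\<close>-point product is at most \<open>nth_diam F N\<^bsup>1/diam_exp N\<^esup>\<close>.\<close>
lemma vandermonde_abs_Suc_powr_le:
  assumes F: "F \<subseteq> cball 0 1" "F \<noteq> {}" and N: "N \<ge> 2" and z: "z \<in> tuples F (Suc N)"
  shows "vandermonde_abs (Suc N) z powr diam_exp (Suc N) \<le> nth_diam F N"
proof (rule powr_diam_exp_Suc_le[OF vandermonde_abs_nonneg nth_diam_nonneg[OF F] N])
  have "vandermonde_abs (Suc N) z ^ (N - 1) = (\<Prod>k<Suc N. vandermonde_abs N (z \<circ> skip k))"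
    by (rule prod_vandermonde_abs_skip[symmetric])
  also have "\<dots> \<le> (\<Prod>k<Suc N. nth_diam F N powr (1 / diam_exp N))"
    using N skip_tuples[OF z]
    by (intro prod_mono conjI vandermonde_abs_nonneg powr_le_imp_le_powr_inverse
        vandermonde_abs_powr_le_nth_diam[OF F(1)]) (auto simp: diam_exp_def)
  finally show "vandermonde_abs (Suc N) z ^ (N - 1) \<le> (nth_diam F N powr (1 / diam_exp N)) ^ Suc N"
    by simp
qed

lemma nth_diam_Suc_le:
  assumes F: "F \<subseteq> cball 0 1" "F \<noteq> {}" and N: "N \<ge> 2"
  shows "nth_diam F (Suc N) \<le> nth_diam F N"
  unfolding nth_diam_eq_SUP[of F "Suc N"]
  using assms by (intro cSUP_least tuples_nonempty vandermonde_abs_Suc_powr_le)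

lemma nth_diam_Suc_tendsto_lim:
  assumes F: "F \<subseteq> cball 0 1" "F \<noteq> {}"
  shows "(\<lambda>n. nth_diam F (Suc n)) \<longlonglongrightarrow> lim (nth_diam F)"
proof -
  define s where "s = (\<lambda>n. nth_diam F (n + 2))"
  have "decseq s" unfolding s_def
    by (rule decseq_SucI) (simp add: nth_diam_Suc_le[OF F])
  moreover have "Bseq s" unfolding s_def
    using nth_diam_le_16[OF F] nth_diam_nonneg[OF F] by (intro BseqI'[of _ 16]) auto
  ultimately obtain L where "s \<longlonglongrightarrow> L"
    using Bseq_monoseq_convergent monoseq_iff unfolding convergent_def by blast
  hence L: "nth_diam F \<longlonglongrightarrow> L" unfolding s_def by (rule LIMSEQ_offset)
  thus ?thesis using LIMSEQ_Suc[OF L] limI[OF L] by simp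
qed

definition row_prod :: "nat \<Rightarrow> (nat \<Rightarrow> complex) \<Rightarrow> nat \<Rightarrow> real"
  where "row_prod N y k = (\<Prod>j\<in>{..<N} - {k}. cmod (y k - y j))"

definition vandermonde_abs_off :: "nat \<Rightarrow> (nat \<Rightarrow> complex) \<Rightarrow> nat \<Rightarrow> real"
  where "vandermonde_abs_off N y k =
    (\<Prod>p\<in>{p\<in>pairs N. fst p \<noteq> k \<and> snd p \<noteq> k}. cmod (y (fst p) - y (snd p)))"

lemma row_prod_nonneg: "0 \<le> row_prod N y k"
  unfolding row_prod_def by (intro prod_nonneg) auto

lemma vandermonde_abs_off_nonneg: "0 \<le> vandermonde_abs_off N y k"
  unfolding vandermonde_abs_off_def by (intro prod_nonneg) auto

lemma vandermonde_abs_off_upd: "vandermonde_abs_off N (y(k := w)) k = vandermonde_abs_off N y k"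
  unfolding vandermonde_abs_off_def by (intro prod.cong refl) auto

lemma row_prod_upd: "row_prod N (y(k := w)) k = (\<Prod>j\<in>{..<N} - {k}. cmod (w - y j))"
  unfolding row_prod_def by (intro prod.cong refl) auto

lemma pairs_containing:
  assumes k: "k < N"
  shows "bij_betw (\<lambda>j. (min j k, max j k)) ({..<N} - {k}) {p\<in>pairs N. fst p = k \<or> snd p = k}"
proof -
  have "p \<in> (\<lambda>j. (min j k, max j k)) ` ({..<N} - {k})"
    if p: "p \<in> {p\<in>pairs N. fst p = k \<or> snd p = k}" for p
  proof -
    obtain a b where ab: "p = (a, b)" by (cases p)
    show ?thesis
    proof (cases "a = k")
      case True
      hence "p = (min b k, max b k)" "b \<in> {..<N} - {k}" using p ab by (auto simp: pairs_def)
      thus ?thesis by blast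
    next
      case False
      hence "p = (min a k, max a k)" "a \<in> {..<N} - {k}" using p ab by (auto simp: pairs_def)
      thus ?thesis by blast
    qed
  qed
  moreover have "(\<lambda>j. (min j k, max j k)) ` ({..<N} - {k}) \<subseteq> {p\<in>pairs N. fst p = k \<or> snd p = k}"
    using k by (auto simp: pairs_def min_def max_def)
  moreover have "inj_on (\<lambda>j. (min j k, max j k)) ({..<N} - {k})"
    unfolding inj_on_def by (auto simp: min_def max_def split: if_splits)
  ultimately show ?thesis unfolding bij_betw_def by blast
qed

lemma row_prod_eq:
  assumes "k < N"
  shows "row_prod N y k = (\<Prod>p\<in>{p\<in>pairs N. fst p = k \<or> snd p = k}. cmod (y (fst p) - y (snd p)))"
  unfolding row_prod_def prod.reindex_bij_betw[OF pairs_containing[OF assms], symmetric]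
  by (intro prod.cong refl) (auto simp: min_def max_def norm_minus_commute)

lemma vandermonde_abs_split:
  assumes k: "k < N" shows "vandermonde_abs N y = row_prod N y k * vandermonde_abs_off N y k"
proof -
  have "pairs N = {p\<in>pairs N. fst p = k \<or> snd p = k} \<union> {p\<in>pairs N. fst p \<noteq> k \<and> snd p \<noteq> k}"
    by auto
  hence "vandermonde_abs N y = (\<Prod>p\<in>{p\<in>pairs N. fst p = k \<or> snd p = k} \<union>
      {p\<in>pairs N. fst p \<noteq> k \<and> snd p \<noteq> k}. cmod (y (fst p) - y (snd p)))"
    unfolding vandermonde_abs_fst_snd by simp
  also have "\<dots> = row_prod N y k * vandermonde_abs_off N y k"
    unfolding row_prod_eq[OF k] vandermonde_abs_off_def
    by (subst prod.union_disjoint) (auto intro: finite_subset[OF _ finite_pairs])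
  finally show ?thesis .
qed

text \<open>Each pair \<open>(j, k)\<close> occurs in exactly two of the row products.\<close>
lemma vandermonde_abs_sq: "vandermonde_abs N y ^ 2 = (\<Prod>k<N. row_prod N y k)"
proof -
  have "(\<Prod>k<N. row_prod N y k) =
      (\<Prod>p\<in>pairs N. cmod (y (fst p) - y (snd p)) ^ card {k\<in>{..<N}. fst p = k \<or> snd p = k})"
    unfolding prod_prod_filter_swap[OF finite_pairs finite_lessThan, symmetric]
    by (intro prod.cong refl row_prod_eq) auto
  also have "\<dots> = (\<Prod>p\<in>pairs N. cmod (y (fst p) - y (snd p)) ^ 2)"
  proof (intro prod.cong refl)
    fix p assume p: "p \<in> pairs N"
    have "{k\<in>{..<N}. fst p = k \<or> snd p = k} = {fst p, snd p}" "card {fst p, snd p} = 2"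
      using p by (auto simp: pairs_def)
    thus "cmod (y (fst p) - y (snd p)) ^ card {k\<in>{..<N}. fst p = k \<or> snd p = k} =
       cmod (y (fst p) - y (snd p)) ^ 2" by simp
  qed
  also have "\<dots> = vandermonde_abs N y ^ 2"
    unfolding vandermonde_abs_fst_snd by (simp add: prod_power_distrib)
  finally show ?thesis by simp
qed

lemma exists_row_prod_le:
  assumes "0 < N" shows "\<exists>k<N. row_prod N y k ^ N \<le> vandermonde_abs N y ^ 2"
proof -
  have "Min (row_prod N y ` {..<N}) \<in> row_prod N y ` {..<N}"
    using assms by (intro Min_in) auto
  then obtain k where k: "k < N" and k_eq: "row_prod N y k = Min (row_prod N y ` {..<N})" by auto
  have k_min: "row_prod N y k \<le> row_prod N y j" if "j < N" for j
    unfolding k_eq using that by (intro Min_le) auto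
  have "row_prod N y k ^ N = (\<Prod>j<N. row_prod N y k)" by simp
  also have "\<dots> \<le> (\<Prod>j<N. row_prod N y j)"
    by (intro prod_mono conjI row_prod_nonneg k_min) auto
  finally show ?thesis using k unfolding vandermonde_abs_sq by blast
qed

lemma exists_near_extremal_tuple:
  assumes F: "F \<subseteq> cball 0 1" "F \<noteq> {}" and N: "N \<ge> 2" and d: "nth_diam F N > 0"
  defines "D \<equiv> nth_diam F N powr (1 / diam_exp N)"
  shows "\<And>y. y \<in> tuples F N \<Longrightarrow> vandermonde_abs N y \<le> D"
    and "\<exists>y\<in>tuples F N. D / 2 < vandermonde_abs N y"
proof -
  have e: "diam_exp N > 0" unfolding diam_exp_def using N by simp
  show "vandermonde_abs N y \<le> D" if "y \<in> tuples F N" for y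
    unfolding D_def using vandermonde_abs_powr_le_nth_diam[OF F(1) that] e
    by (intro powr_le_imp_le_powr_inverse vandermonde_abs_nonneg)
  have "D > 0" unfolding D_def using d by simp
  hence "(D / 2) powr diam_exp N < D powr diam_exp N" using e by (intro powr_less_mono2) auto
  also have "D powr diam_exp N = nth_diam F N" unfolding D_def using d e by (simp add: powr_powr)
  finally obtain y where y: "y \<in> tuples F N"
    and "(D / 2) powr diam_exp N < vandermonde_abs N y powr diam_exp N"
    using less_cSUP_iff[OF tuples_nonempty[OF F(2)] bdd_above_vandermonde_abs_powr[OF F(1)]]
    unfolding nth_diam_eq_SUP by blast
  hence "D / 2 < vandermonde_abs N y"
    using e vandermonde_abs_nonneg[of N y] by (meson linorder_not_le powr_mono2 less_imp_le)
  thus "\<exists>y\<in>tuples F N. D / 2 < vandermonde_abs N y" using y by blast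
qed

lemma le_power_if_power_le_sq:
  fixes r V d :: real
  assumes d: "0 < d" and V: "0 \<le> V" "V \<le> d powr (1 / diam_exp (Suc n))"
    and r: "r ^ Suc n \<le> V\<^sup>2"
  shows "r \<le> d ^ n"
proof -
  have "(d powr (1 / diam_exp (Suc n)))\<^sup>2 = d powr (2 / diam_exp (Suc n))"
    using d by (simp add: powr_realpow[symmetric] powr_powr)
  also have "2 / diam_exp (Suc n) = real (Suc n * n)" unfolding diam_exp_def by (simp add: algebra_simps)
  also have "d powr real (Suc n * n) = d ^ (Suc n * n)" by (rule powr_realpow[OF d])
  also have "\<dots> = (d ^ n) ^ Suc n" by (simp only: mult.commute[of "Suc n" n] power_mult)
  finally have "V\<^sup>2 \<le> (d ^ n) ^ Suc n" using V by (metis power_mono)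
  with r have "r ^ Suc n \<le> (d ^ n) ^ Suc n" by (rule order_trans)
  thus ?thesis by (rule power_le_imp_le_base) (use d in simp)
qed

text \<open>If \<open>y\<close> is within a factor \<open>2\<close> of the maximal Vandermonde product, moving its point \<open>y\<^sub>k\<close>
  to any \<open>w \<in> F\<close> multiplies the product by less than \<open>2\<close>; only the row of \<open>k\<close> changes.\<close>
lemma row_prod_upd_less:
  assumes upper: "\<And>y. y \<in> tuples F N \<Longrightarrow> vandermonde_abs N y \<le> D"
    and y: "y \<in> tuples F N" and large: "D / 2 < vandermonde_abs N y" and k: "k < N" and w: "w \<in> F"
  shows "row_prod N (y(k := w)) k < 2 * row_prod N y k"
proof -
  have "vandermonde_abs N y > 0" using large upper[OF y] by simp
  hence off_pos: "vandermonde_abs_off N y k > 0"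
    using vandermonde_abs_off_nonneg[of N y k] unfolding vandermonde_abs_split[OF k]
    by (cases "vandermonde_abs_off N y k = 0") simp_all
  have "row_prod N (y(k := w)) k * vandermonde_abs_off N y k \<le> D"
    using upper[of "y(k := w)"] y w unfolding vandermonde_abs_split[OF k] vandermonde_abs_off_upd
    by (simp add: tuples_def)
  hence "row_prod N (y(k := w)) k * vandermonde_abs_off N y k
      < (2 * row_prod N y k) * vandermonde_abs_off N y k"
    using large unfolding vandermonde_abs_split[OF k] by simp
  thus ?thesis using off_pos by simp
qed

text \<open>Take \<open>n + 1\<close> points \<open>y\<close> with nearly maximal Vandermonde product and drop a point \<open>y\<^sub>k\<close> of
  minimal row product; that row product is at most \<open>d\<^sup>n\<close> with \<open>d = nth_diam F (n + 1)\<close>.\<close>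
lemma fekete_points_bound:
  assumes F: "F \<subseteq> cball 0 1" "F \<noteq> {}" and n: "n \<ge> 1" and pos: "nth_diam F (Suc n) > 0"
  shows "\<exists>z. (\<forall>i<n. z i \<in> F) \<and>
           (\<forall>w\<in>F. (\<Prod>i<n. cmod (w - z i)) \<le> 2 * nth_diam F (Suc n) ^ n)"
proof -
  define d where "d = nth_diam F (Suc n)"
  define D where "D = d powr (1 / diam_exp (Suc n))"
  have N: "Suc n \<ge> 2" using n by simp
  note upper = exists_near_extremal_tuple(1)[OF F N pos, folded d_def, folded D_def]
  obtain y where y: "y \<in> tuples F (Suc n)" and large: "D / 2 < vandermonde_abs (Suc n) y"
    using exists_near_extremal_tuple(2)[OF F N pos, folded d_def, folded D_def] by blast
  obtain k where k: "k < Suc n"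
    and k_le: "row_prod (Suc n) y k ^ Suc n \<le> (vandermonde_abs (Suc n) y)\<^sup>2"
    using exists_row_prod_le[of "Suc n" y] by auto
  have row_le: "row_prod (Suc n) y k \<le> d ^ n"
    using pos[folded d_def] vandermonde_abs_nonneg upper[OF y, unfolded D_def] k_le
    by (rule le_power_if_power_le_sq)
  define z where "z = y \<circ> skip k"
  have "\<forall>i<n. z i \<in> F" using skip_tuples[OF y k] unfolding z_def tuples_def by auto
  moreover have "(\<Prod>i<n. cmod (w - z i)) \<le> 2 * d ^ n" if w: "w \<in> F" for w
  proof -
    have "(\<Prod>i<n. cmod (w - z i)) = row_prod (Suc n) (y(k := w)) k"
      unfolding row_prod_upd z_def using prod.reindex_bij_betw[OF bij_betw_skip[OF k]] by simp
    thus ?thesis using row_prod_upd_less[OF upper y large k w] row_le by simp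
  qed
  ultimately show ?thesis unfolding d_def by blast
qed

section \<open>Toeplitz forms as integrals of trigonometric polynomials\<close>

definition fourier_exp :: "int \<Rightarrow> real \<Rightarrow> complex"
  where "fourier_exp t x = exp (- \<i> * of_int t * of_real x)"

definition density_restrict :: "(real \<Rightarrow> real) \<Rightarrow> real \<Rightarrow> real"
  where "density_restrict f x = indicator {-pi..pi} x * f x"

definition trig_poly :: "nat \<Rightarrow> (nat \<Rightarrow> complex) \<Rightarrow> real \<Rightarrow> complex"
  where "trig_poly N v x = (\<Sum>k<N. v k * fourier_exp (int k) x)"

lemma fourier_exp_mult: "fourier_exp a x * fourier_exp b x = fourier_exp (a + b) x"
  unfolding fourier_exp_def by (simp add: exp_add[symmetric] algebra_simps)

lemma cnj_fourier_exp: "cnj (fourier_exp a x) = fourier_exp (- a) x"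
  unfolding fourier_exp_def by (simp add: exp_cnj)

lemma norm_fourier_exp: "cmod (fourier_exp a x) = 1"
  unfolding fourier_exp_def by (simp add: norm_exp_eq_Re)

lemma fourier_exp_eq_cnj_cis_power: "fourier_exp (int k) x = cnj (cis x) ^ k"
proof -
  have "cnj (cis x) ^ k = cis (real k * (- x))" unfolding cis_cnj by (rule Complex.DeMoivre)
  also have "\<dots> = exp (\<i> * complex_of_real (real k * (- x)))" by (rule cis_conv_exp)
  finally show ?thesis unfolding fourier_exp_def by (simp add: algebra_simps)
qed

lemma continuous_on_trig_poly: "continuous_on UNIV (trig_poly N v)"
  unfolding trig_poly_def fourier_exp_def by (intro continuous_intros)

lemma density_restrict_nonneg: "spectral_density f \<Longrightarrow> 0 \<le> density_restrict f x"
  unfolding spectral_density_def density_restrict_def indicator_def by auto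

lemma integrable_density_restrict: "spectral_density f \<Longrightarrow> integrable lborel (density_restrict f)"
  unfolding spectral_density_def set_integrable_def density_restrict_def by simp

lemma cov_fun_eq_integral: "cov_fun f t = (LINT x|lborel. fourier_exp t x * of_real (density_restrict f x))"
  unfolding cov_fun_def set_lebesgue_integral_def density_restrict_def fourier_exp_def
  by (intro Bochner_Integration.integral_cong refl) (simp add: indicator_def)

lemma integrable_bounded_mult_density:
  assumes sd: "spectral_density f" and g: "continuous_on UNIV g" and bound: "\<And>x. cmod (g x) \<le> B"
  shows "integrable lborel (\<lambda>x. g x * of_real (density_restrict f x))"
proof (rule Bochner_Integration.integrable_bound)
  show "integrable lborel (\<lambda>x. B * density_restrict f x)"
    using integrable_density_restrict[OF sd] by simp
  have "g \<in> borel_measurable lborel" using borel_measurable_continuous_onI[OF g] by simp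
  moreover have "density_restrict f \<in> borel_measurable lborel"
    using integrable_density_restrict[OF sd] by auto
  ultimately show "(\<lambda>x. g x * of_real (density_restrict f x)) \<in> borel_measurable lborel"
    by measurable
  have "0 \<le> B" using bound[of 0] norm_ge_zero order_trans by blast
  thus "AE x in lborel. norm (g x * of_real (density_restrict f x)) \<le> norm (B * density_restrict f x)"
    using bound density_restrict_nonneg[OF sd]
    by (intro AE_I2) (simp add: norm_mult abs_mult mult_right_mono)
qed

lemma integrable_fourier_exp_density:
  "spectral_density f \<Longrightarrow> integrable lborel (\<lambda>x. fourier_exp t x * of_real (density_restrict f x))"
  by (rule integrable_bounded_mult_density[where B = 1])
    (auto simp: norm_fourier_exp fourier_exp_def intro!: continuous_intros)

lemma integral_double_sum:
  fixes g :: "nat \<Rightarrow> nat \<Rightarrow> real \<Rightarrow> complex"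
  assumes "\<And>i j. integrable M (g i j)"
  shows "(LINT x|M. (\<Sum>i<N. \<Sum>j<N. g i j x)) = (\<Sum>i<N. \<Sum>j<N. LINT x|M. g i j x)"
  using assms by (simp add: Bochner_Integration.integral_sum)

lemma cmod_trig_poly_sq:
  "complex_of_real ((cmod (trig_poly N v x))\<^sup>2) =
   (\<Sum>i<N. \<Sum>j<N. cnj (v i) * v j * fourier_exp (int j - int i) x)"
proof -
  have "complex_of_real ((cmod (trig_poly N v x))\<^sup>2) = trig_poly N v x * cnj (trig_poly N v x)"
    by (rule complex_norm_square)
  also have "\<dots> = (\<Sum>i<N. \<Sum>j<N. cnj (v i) * v j * fourier_exp (int j - int i) x)"
    unfolding trig_poly_def cnj_sum sum_distrib_left sum_distrib_right
    by (intro sum.cong refl) (simp add: cnj_fourier_exp mult_ac fourier_exp_mult)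
  finally show ?thesis .
qed

lemma toeplitz_sesq_eq_integral:
  assumes sd: "spectral_density f"
  shows "sesq (Suc n) (entries (toeplitz_mat f n)) v v =
     of_real (LINT x|lborel. (cmod (trig_poly (Suc n) v x))\<^sup>2 * density_restrict f x)"
proof -
  define N where "N = Suc n"
  define g where "g i j x = cnj (v i) * v j * (fourier_exp (int j - int i) x * of_real (density_restrict f x))"
    for i j x
  have "sesq N (entries (toeplitz_mat f n)) v v = (\<Sum>i<N. \<Sum>j<N. LINT x|lborel. g i j x)"
    unfolding sesq_def g_def
    by (intro sum.cong refl) (simp add: toeplitz_mat_def N_def cov_fun_eq_integral mult_ac)
  also have "\<dots> = (LINT x|lborel. (\<Sum>i<N. \<Sum>j<N. g i j x))"
    unfolding g_def by (rule integral_double_sum[symmetric])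
      (intro integrable_mult_right integrable_fourier_exp_density[OF sd])
  also have "\<dots> = (LINT x|lborel. complex_of_real ((cmod (trig_poly N v x))\<^sup>2 * density_restrict f x))"
    unfolding of_real_mult cmod_trig_poly_sq sum_distrib_right g_def
    by (intro Bochner_Integration.integral_cong refl sum.cong) (simp add: mult_ac)
  also have "\<dots> = of_real (LINT x|lborel. (cmod (trig_poly N v x))\<^sup>2 * density_restrict f x)"
    by (rule integral_complex_of_real)
  finally show ?thesis unfolding N_def .
qed

lemma toeplitz_sesq_nonneg:
  "spectral_density f \<Longrightarrow> 0 \<le> Re (sesq (Suc n) (entries (toeplitz_mat f n)) v v)"
  unfolding toeplitz_sesq_eq_integral by (simp add: density_restrict_nonneg)

lemma hermitian_toeplitz: "hermitian (Suc n) (entries (toeplitz_mat f n))"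
  unfolding hermitian_def
proof (intro allI impI)
  fix i j assume ij: "i < Suc n" "j < Suc n"
  have "cnj (cov_fun f (int i - int j)) =
      (LINT x|lborel. cnj (fourier_exp (int i - int j) x * of_real (density_restrict f x)))"
    unfolding cov_fun_eq_integral by (rule Bochner_Integration.integral_cnj[symmetric])
  also have "\<dots> = cov_fun f (int j - int i)" unfolding cov_fun_eq_integral by (simp add: cnj_fourier_exp)
  finally show "toeplitz_mat f n $$ (i, j) = cnj (toeplitz_mat f n $$ (j, i))"
    using ij unfolding toeplitz_mat_def by simp
qed

lemma toeplitz_mat_carrier: "toeplitz_mat f n \<in> carrier_mat (Suc n) (Suc n)"
  unfolding toeplitz_mat_def by simp

lemma finite_real_eigenvalues:
  fixes A :: "complex mat"
  assumes A: "A \<in> carrier_mat N N"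
  shows "finite {x::real. eigenvalue A (of_real x)}"
proof -
  have "char_poly A \<noteq> 0"
    using degree_monic_char_poly[OF A] by (metis coeff_0 zero_neq_one)
  hence "finite {z. poly (char_poly A) z = 0}" by (rule poly_roots_finite)
  moreover have "{x::real. eigenvalue A (of_real x)} \<subseteq> Re ` {z. poly (char_poly A) z = 0}"
    using eigenvalue_root_char_poly[OF A] by (auto intro: image_eqI[of _ Re "of_real _"])
  ultimately show ?thesis using finite_subset by blast
qed

lemma sesq_eigenvector:
  assumes A: "A \<in> carrier_mat N N" and u: "u \<in> carrier_vec N" and Au: "A *\<^sub>v u = c \<cdot>\<^sub>v u"
  shows "sesq N (entries A) (vec_index u) (vec_index u) = c * of_real (norm_sq N (vec_index u))"
proof -
  have "sesq N (entries A) (vec_index u) (vec_index u) = (\<Sum>i<N. cnj (u $ i) * (A *\<^sub>v u) $ i)"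
    unfolding sesq_def
    using A u by (intro sum.cong refl)
      (simp add: scalar_prod_def atLeast0LessThan sum_distrib_left mult.assoc)
  also have "\<dots> = (\<Sum>i<N. c * (cnj (u $ i) * u $ i))"
    using u unfolding Au by (intro sum.cong refl) (simp add: mult_ac)
  also have "\<dots> = c * of_real (norm_sq N (vec_index u))"
    unfolding norm_sq_def of_real_sum sum_distrib_left cnj_mult_self by simp
  finally show ?thesis .
qed

lemma psd_real_eigenvalue_nonneg:
  fixes A :: "complex mat"
  assumes A: "A \<in> carrier_mat N N" and psd: "\<And>v. 0 \<le> Re (sesq N (entries A) v v)"
    and eig: "eigenvalue A (of_real x)"
  shows "0 \<le> x"
proof -
  obtain u where "eigenvector A u (of_real x)" using eig unfolding eigenvalue_def by auto
  hence u: "u \<in> carrier_vec N" "u \<noteq> 0\<^sub>v N" "A *\<^sub>v u = of_real x \<cdot>\<^sub>v u"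
    using A unfolding eigenvector_def by auto
  have "norm_sq N (vec_index u) \<noteq> 0"
  proof
    assume "norm_sq N (vec_index u) = 0"
    hence "u = 0\<^sub>v N" using norm_sq_eq_0D u(1) by (intro eq_vecI) auto
    thus False using u(2) by simp
  qed
  hence "norm_sq N (vec_index u) > 0" using norm_sq_nonneg[of N "vec_index u"] by simp
  moreover have "0 \<le> x * norm_sq N (vec_index u)"
    using psd[of "vec_index u"] sesq_eigenvector[OF A u(1) u(3)] by simp
  ultimately show ?thesis by (simp add: zero_le_mult_iff)
qed

lemma min_eig_le_rayleigh:
  assumes v: "norm_sq (Suc n) v > 0"
  shows "eigenvalue (toeplitz_mat f n) (of_real (min_eig f n))"
    and "min_eig f n * norm_sq (Suc n) v \<le> Re (sesq (Suc n) (entries (toeplitz_mat f n)) v v)"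
proof -
  define S where "S = {x::real. eigenvalue (toeplitz_mat f n) (of_real x)}"
  have fin: "finite S" unfolding S_def by (rule finite_real_eigenvalues[OF toeplitz_mat_carrier])
  obtain \<mu> where "\<mu> \<in> S"
    and \<mu>: "\<mu> * norm_sq (Suc n) v \<le> Re (sesq (Suc n) (entries (toeplitz_mat f n)) v v)"
    using hermitian_eigenvalue_le_rayleigh[OF toeplitz_mat_carrier hermitian_toeplitz v]
    unfolding S_def by blast
  have min_eig: "min_eig f n = Min S" unfolding min_eig_def S_def ..
  have "Min S \<in> S" using fin \<open>\<mu> \<in> S\<close> by (intro Min_in) auto
  thus "eigenvalue (toeplitz_mat f n) (of_real (min_eig f n))" unfolding min_eig S_def by simp
  have "Min S * norm_sq (Suc n) v \<le> \<mu> * norm_sq (Suc n) v"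
    using fin \<open>\<mu> \<in> S\<close> v by (intro mult_right_mono Min_le) auto
  thus "min_eig f n * norm_sq (Suc n) v \<le> Re (sesq (Suc n) (entries (toeplitz_mat f n)) v v)"
    using \<mu> min_eig by simp
qed

lemma min_eig_nonneg: assumes "spectral_density f" shows "0 \<le> min_eig f n"
proof -
  have "norm_sq (Suc n) (\<lambda>_. 1) > 0" unfolding norm_sq_def by simp
  thus ?thesis
    using psd_real_eigenvalue_nonneg[OF toeplitz_mat_carrier toeplitz_sesq_nonneg[OF assms]]
      min_eig_le_rayleigh(1) by blast
qed

lemma closure_E_set_subset: "closure (E_set f) \<subseteq> cball 0 1"
  by (rule closure_minimal) (auto simp: E_set_def)

lemma infinite_E_set: assumes sd: "spectral_density f" shows "infinite (E_set f)"
proof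
  assume fin: "finite (E_set f)"
  define A where "A = {x\<in>{-pi..pi}. 0 < f x}"
  have "inj_on cis (A - {-pi})"
  proof (rule inj_onI)
    fix x y assume "x \<in> A - {-pi}" "y \<in> A - {-pi}" "cis x = cis y"
    hence "x \<in> {-pi<..pi}" "y \<in> {-pi<..pi}" "Arg (cis x) = Arg (cis y)" unfolding A_def by auto
    thus "x = y" using Arg_cis by metis
  qed
  moreover have "cis ` (A - {-pi}) \<subseteq> E_set f" unfolding A_def E_set_def by auto
  ultimately have "finite (A - {-pi})" using fin by (meson finite_imageD finite_subset)
  hence "finite A" by simp
  hence "emeasure lborel A = 0" using finite_imp_null_set_lborel by auto
  thus False using sd unfolding spectral_density_def A_def by simp
qed

lemma infinite_closure_E_set: "spectral_density f \<Longrightarrow> infinite (closure (E_set f))"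
  using infinite_super[OF closure_subset infinite_E_set] .

lemma cis_in_E_set: assumes "density_restrict f x > 0" shows "cis x \<in> E_set f"
proof (cases "x \<in> {-pi..pi}")
  case True thus ?thesis using assms unfolding E_set_def density_restrict_def by auto
next
  case False thus ?thesis using assms by (simp add: density_restrict_def)
qed

section \<open>Bounding the smallest eigenvalue\<close>

text \<open>The trigonometric polynomial with coefficients \<open>conj\<close> of those of \<open>\<Prod>(w - z\<^sub>i)\<close>
  has modulus \<open>|\<Prod>(e\<^sup>i\<^sup>x - z\<^sub>i)|\<close>, and its leading coefficient \<open>1\<close> makes \<open>\<parallel>v\<parallel>\<^sup>2 \<ge> 1\<close>.\<close>
lemma monic_trig_poly:
  "\<exists>v. norm_sq (Suc n) v \<ge> 1 \<and>
       (\<forall>x. cmod (trig_poly (Suc n) v x) = (\<Prod>i<n. cmod (cis x - z i)))"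
proof -
  define p :: "complex poly" where "p = (\<Prod>i<n. [:- z i, 1:])"
  have deg: "degree p = n" unfolding p_def by (subst degree_prod_eq_sum_degree) auto
  have lead: "coeff p n = 1"
    using lead_coeff_prod[of "\<lambda>i. [:- z i, 1:]" "{..<n}"] deg unfolding p_def by simp
  define v where "v = (\<lambda>k. cnj (coeff p k))"
  have "norm_sq (Suc n) v \<ge> 1"
    using sq_cmod_le_norm_sq[of n "Suc n" v] lead unfolding v_def by simp
  moreover have "cmod (trig_poly (Suc n) v x) = (\<Prod>i<n. cmod (cis x - z i))" for x
  proof -
    have "cnj (poly p (cis x)) = (\<Sum>k<Suc n. v k * cnj (cis x) ^ k)"
      unfolding poly_altdef deg v_def lessThan_Suc_atMost[symmetric] cnj_sum by simp
    hence "trig_poly (Suc n) v x = cnj (poly p (cis x))"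
      unfolding trig_poly_def fourier_exp_eq_cnj_cis_power by simp
    hence "cmod (trig_poly (Suc n) v x) = cmod (poly p (cis x))" by simp
    thus ?thesis unfolding p_def poly_prod by (simp add: prod_norm)
  qed
  ultimately show ?thesis by blast
qed

lemma integral_sq_trig_poly_le:
  assumes sd: "spectral_density f"
    and bound: "\<And>x. density_restrict f x > 0 \<Longrightarrow> cmod (trig_poly N v x) \<le> B"
  shows "(LINT x|lborel. (cmod (trig_poly N v x))\<^sup>2 * density_restrict f x)
           \<le> B\<^sup>2 * (LINT x|lborel. density_restrict f x)"
proof -
  have pointwise: "(cmod (trig_poly N v x))\<^sup>2 * density_restrict f x \<le> B\<^sup>2 * density_restrict f x" for x
  proof (cases "density_restrict f x > 0")
    case True
    thus ?thesis using bound[OF True] by (intro mult_right_mono power_mono) auto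
  next
    case False
    thus ?thesis using density_restrict_nonneg[OF sd, of x] by simp
  qed
  have "integrable lborel (\<lambda>x. (cmod (trig_poly N v x))\<^sup>2 * density_restrict f x)"
  proof (rule Bochner_Integration.integrable_bound)
    show "integrable lborel (\<lambda>x. B\<^sup>2 * density_restrict f x)"
      using integrable_density_restrict[OF sd] by simp
    have "trig_poly N v \<in> borel_measurable lborel"
      using borel_measurable_continuous_onI[OF continuous_on_trig_poly] by simp
    moreover have "density_restrict f \<in> borel_measurable lborel"
      using integrable_density_restrict[OF sd] by auto
    ultimately show "(\<lambda>x. (cmod (trig_poly N v x))\<^sup>2 * density_restrict f x) \<in> borel_measurable lborel"
      by measurable
    show "AE x in lborel. norm ((cmod (trig_poly N v x))\<^sup>2 * density_restrict f x)
        \<le> norm (B\<^sup>2 * density_restrict f x)"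
      using pointwise density_restrict_nonneg[OF sd] by (simp add: abs_mult)
  qed
  hence "(LINT x|lborel. (cmod (trig_poly N v x))\<^sup>2 * density_restrict f x)
      \<le> (LINT x|lborel. B\<^sup>2 * density_restrict f x)"
    using integrable_density_restrict[OF sd] by (intro integral_mono pointwise) auto
  thus ?thesis by simp
qed

text \<open>Test the Rayleigh quotient with the polynomial \<open>\<Prod>(w - z\<^sub>i)\<close> whose roots are the points
  provided by \<open>fekete_points_bound\<close>: it is at most \<open>2 \<delta>\<^sup>n\<close> on \<open>E\<^sub>f\<close>.\<close>
lemma min_eig_le_nth_diam_power:
  assumes sd: "spectral_density f" and n: "n \<ge> 1"
  shows "min_eig f n \<le> 4 * (LINT x|lborel. density_restrict f x) *
           nth_diam (closure (E_set f)) (Suc n) ^ (2 * n)"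
proof -
  define F where "F = closure (E_set f)"
  define \<delta> where "\<delta> = nth_diam F (Suc n)"
  have F: "F \<subseteq> cball 0 1" "infinite F"
    unfolding F_def using closure_E_set_subset infinite_closure_E_set[OF sd] by auto
  obtain z where z: "\<forall>w\<in>F. (\<Prod>i<n. cmod (w - z i)) \<le> 2 * \<delta> ^ n"
    using fekete_points_bound[OF F(1) _ n nth_diam_pos[OF F]] F(2) unfolding \<delta>_def by fastforce
  obtain v where v: "norm_sq (Suc n) v \<ge> 1"
    and v_eq: "\<And>x. cmod (trig_poly (Suc n) v x) = (\<Prod>i<n. cmod (cis x - z i))"
    using monic_trig_poly by blast
  have "cmod (trig_poly (Suc n) v x) \<le> 2 * \<delta> ^ n" if "density_restrict f x > 0" for x
    using z cis_in_E_set[OF that] closure_subset unfolding v_eq F_def by blast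
  hence form_le: "Re (sesq (Suc n) (entries (toeplitz_mat f n)) v v)
      \<le> (2 * \<delta> ^ n)\<^sup>2 * (LINT x|lborel. density_restrict f x)"
    unfolding toeplitz_sesq_eq_integral[OF sd] Re_complex_of_real
    by (rule integral_sq_trig_poly_le[OF sd])
  have "min_eig f n \<le> min_eig f n * norm_sq (Suc n) v"
    using min_eig_nonneg[OF sd, of n] v by (simp add: mult_le_cancel_left1)
  also have "\<dots> \<le> Re (sesq (Suc n) (entries (toeplitz_mat f n)) v v)"
    using v by (intro min_eig_le_rayleigh(2)) simp
  also have "\<dots> \<le> (2 * \<delta> ^ n)\<^sup>2 * (LINT x|lborel. density_restrict f x)" by (rule form_le)
  also have "\<dots> = 4 * (LINT x|lborel. density_restrict f x) * \<delta> ^ (2 * n)"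
    unfolding power_even_eq by (simp add: power_mult_distrib)
  finally show ?thesis unfolding \<delta>_def F_def .
qed

lemma tendsto_powr_inverse_nat: "(0::real) < C \<Longrightarrow> (\<lambda>n. C powr (1 / (2 * real n))) \<longlonglongrightarrow> 1"
proof -
  assume "0 < C"
  have "(\<lambda>n. (ln C / 2) / real n) \<longlonglongrightarrow> 0" by (rule lim_const_over_n)
  hence "(\<lambda>n. exp ((ln C / 2) / real n)) \<longlonglongrightarrow> exp 0" by (rule tendsto_exp)
  moreover have "exp ((ln C / 2) / real n) = C powr (1 / (2 * real n))" for n
    using \<open>0 < C\<close> unfolding powr_def by simp
  ultimately show ?thesis by simp
qed

lemma min_eig_root_le:
  assumes sd: "spectral_density f" and n: "n \<ge> 1"
  defines "C \<equiv> max 1 (4 * (LINT x|lborel. density_restrict f x))"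
  shows "min_eig f n powr (1 / (2 * real n))
           \<le> C powr (1 / (2 * real n)) * nth_diam (closure (E_set f)) (Suc n)"
proof -
  define \<delta> where "\<delta> = nth_diam (closure (E_set f)) (Suc n)"
  have "\<delta> > 0"
    unfolding \<delta>_def by (intro nth_diam_pos closure_E_set_subset infinite_closure_E_set[OF sd])
  have "min_eig f n \<le> 4 * (LINT x|lborel. density_restrict f x) * \<delta> ^ (2 * n)"
    using min_eig_le_nth_diam_power[OF sd n] unfolding \<delta>_def .
  also have "\<dots> \<le> C * \<delta> ^ (2 * n)"
    unfolding C_def using \<open>\<delta> > 0\<close> by (intro mult_right_mono) auto
  finally have "min_eig f n powr (1 / (2 * real n)) \<le> (C * \<delta> ^ (2 * n)) powr (1 / (2 * real n))"
    using min_eig_nonneg[OF sd] by (intro powr_mono2) auto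
  also have "\<dots> = C powr (1 / (2 * real n)) * (\<delta> powr real (2 * n)) powr (1 / (2 * real n))"
    unfolding powr_realpow[OF \<open>\<delta> > 0\<close>] using \<open>\<delta> > 0\<close> unfolding C_def by (simp add: powr_mult)
  also have "(\<delta> powr real (2 * n)) powr (1 / (2 * real n)) = \<delta>"
    using \<open>\<delta> > 0\<close> n by (simp add: powr_powr)
  finally show ?thesis unfolding \<delta>_def .
qed

theorem mainTheorem17:
  fixes f :: "real \<Rightarrow> real"
  assumes "spectral_density f"
  shows "limsup (\<lambda>n. ereal (min_eig f n powr (1 / (2 * real n))))
           \<le> ereal (outer_transfinite_diam (E_set f))"
proof -
  define F where "F = closure (E_set f)"
  define C where "C = max 1 (4 * (LINT x|lborel. density_restrict f x))"
  define b where "b n = C powr (1 / (2 * real n)) * nth_diam F (Suc n)" for n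
  have F: "F \<subseteq> cball 0 1" "F \<noteq> {}"
    unfolding F_def using closure_E_set_subset infinite_closure_E_set[OF assms] by auto
  have "b \<longlonglongrightarrow> 1 * lim (nth_diam F)"
    unfolding b_def C_def
    by (intro tendsto_mult tendsto_powr_inverse_nat nth_diam_Suc_tendsto_lim[OF F]) simp
  hence lim_b: "limsup (\<lambda>n. ereal (b n)) = ereal (outer_transfinite_diam (E_set f))"
    unfolding outer_transfinite_diam_def transfinite_diam_def F_def
    by (intro lim_imp_Limsup) (simp_all add: tendsto_ereal)
  have "min_eig f n powr (1 / (2 * real n)) \<le> b n" if "n \<ge> 1" for n
    using min_eig_root_le[OF assms that] unfolding b_def C_def F_def .
  hence "\<forall>\<^sub>F n in sequentially. ereal (min_eig f n powr (1 / (2 * real n))) \<le> ereal (b n)"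
    by (intro eventually_sequentiallyI[of 1]) simp
  from Limsup_mono[OF this] show ?thesis unfolding lim_b .
qed

end
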